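(* For any compilation chain and any trace relation ${\sim}\subseteq\mathit{Trace}_S\times\mathit{Trace}_T$ with existential and universal images $\tilde\tau,\tilde\sigma$ (lifted to hyperproperties), $\mathit{HC}^{\sim}$ is equivalent to $\mathit{HP}^{\tilde\tau}$. Moreover, if $\tilde\tau\circ\tilde\sigma=\mathrm{id}$ (a Galois insertion), then $\mathit{HC}^{\sim}$ implies $\mathit{HP}^{\tilde\sigma}$; and if $\tilde\sigma\circ\tilde\tau=\mathrm{id}$ (a Galois reflection), then $\mathit{HP}^{\tilde\sigma}$ implies $\mathit{HC}^{\sim}$. Here $\mathit{HC}^{\sim}\equiv\forall W.\ \mathit{beh}(W{\downarrow})=\tilde\tau(\mathit{beh}(W))$; $\mathit{HP}^{\tilde\tau}\equiv\forall W\ \forall H_S.\ W\models H_S\Rightarrow W{\downarrow}\models\tilde\tau(H_S)$; $\mathit{HP}^{\tilde\sigma}\equiv\forall W\ \forall H_T.\ W\models\tilde\sigma(H_T)\Rightarrow W{\downarrow}\models H_T$.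
   Context: A compilation chain consists of source (whole) programs $W$, target programs, sets $\mathit{Trace}_S,\mathit{Trace}_T$ of traces, semantics relations $W\rightsquigarrow t$ at both levels, and a compiler $W\mapsto W{\downarrow}$. $\mathit{beh}(W)=\{t\mid W\rightsquigarrow t\}$. A hyperproperty is a set of sets of traces; $W\models H$ iff $\mathit{beh}(W)\in H$. The existential image of $\sim$ is $\tilde\tau(\pi)=\{t\mid\exists s.\ s\sim t\wedge s\in\pi\}$ and its universal image is $\tilde\sigma(\pi)=\{s\mid\forall t.\ s\sim t\Rightarrow t\in\pi\}$; on hyperproperties, $\tilde\tau(H_S)=\{\tilde\tau(\pi)\mid\pi\in H_S\}$ and $\tilde\sigma(H_T)=\{\tilde\sigma(\pi)\mid\pi\in H_T\}$. The identities $\tilde\tau\circ\tilde\sigma=\mathrm{id}$, $\tilde\sigma\circ\tilde\tau=\mathrm{id}$ refer to the maps on trace properties. *)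

theory Defs
  imports Main
begin

definition beh :: "('p \<Rightarrow> 't \<Rightarrow> bool) \<Rightarrow> 'p \<Rightarrow> 't set" where
  "beh sem W = {t. sem W t}"

definition sat :: "('p \<Rightarrow> 't \<Rightarrow> bool) \<Rightarrow> 'p \<Rightarrow> 't set set \<Rightarrow> bool" where
  "sat sem W H \<longleftrightarrow> beh sem W \<in> H"

definition tau :: "('ts \<Rightarrow> 'tt \<Rightarrow> bool) \<Rightarrow> 'ts set \<Rightarrow> 'tt set" where
  "tau rel \<pi> = {t. \<exists>s. rel s t \<and> s \<in> \<pi>}"

definition sigma :: "('ts \<Rightarrow> 'tt \<Rightarrow> bool) \<Rightarrow> 'tt set \<Rightarrow> 'ts set" where
  "sigma rel \<pi> = {s. \<forall>t. rel s t \<longrightarrow> t \<in> \<pi>}"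

definition tauH :: "('ts \<Rightarrow> 'tt \<Rightarrow> bool) \<Rightarrow> 'ts set set \<Rightarrow> 'tt set set" where
  "tauH rel H = tau rel ` H"

definition sigmaH :: "('ts \<Rightarrow> 'tt \<Rightarrow> bool) \<Rightarrow> 'tt set set \<Rightarrow> 'ts set set" where
  "sigmaH rel H = sigma rel ` H"

definition HC :: "('ps \<Rightarrow> 'ts \<Rightarrow> bool) \<Rightarrow> ('pt \<Rightarrow> 'tt \<Rightarrow> bool) \<Rightarrow> ('ps \<Rightarrow> 'pt)
    \<Rightarrow> ('ts \<Rightarrow> 'tt \<Rightarrow> bool) \<Rightarrow> bool" where
  "HC semS semT cmp rel \<longleftrightarrow> (\<forall>W. beh semT (cmp W) = tau rel (beh semS W))"

definition HP_tau :: "('ps \<Rightarrow> 'ts \<Rightarrow> bool) \<Rightarrow> ('pt \<Rightarrow> 'tt \<Rightarrow> bool) \<Rightarrow> ('ps \<Rightarrow> 'pt)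
    \<Rightarrow> ('ts \<Rightarrow> 'tt \<Rightarrow> bool) \<Rightarrow> bool" where
  "HP_tau semS semT cmp rel \<longleftrightarrow>
     (\<forall>W HS. sat semS W HS \<longrightarrow> sat semT (cmp W) (tauH rel HS))"

definition HP_sigma :: "('ps \<Rightarrow> 'ts \<Rightarrow> bool) \<Rightarrow> ('pt \<Rightarrow> 'tt \<Rightarrow> bool) \<Rightarrow> ('ps \<Rightarrow> 'pt)
    \<Rightarrow> ('ts \<Rightarrow> 'tt \<Rightarrow> bool) \<Rightarrow> bool" where
  "HP_sigma semS semT cmp rel \<longleftrightarrow>
     (\<forall>W HT. sat semS W (sigmaH rel HT) \<longrightarrow> sat semT (cmp W) HT)"

end

theory Submission
  imports Defs
begin

text \<open>A program satisfies the singleton hyperproperty \<open>{\<pi>}\<close> exactly when its behaviour is \<open>\<pi>\<close>.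
  Instantiating the preservation statements with singletons therefore recovers the
  pointwise criterion \<open>HC\<close>; conversely \<open>HC\<close> transports behaviours along \<open>tau rel\<close>, which
  gives \<open>HP_tau\<close> directly and \<open>HP_sigma\<close> once \<open>tau rel\<close> undoes \<open>sigma rel\<close>.\<close>

lemma sat_singleton_iff: "sat sem W {\<pi>} \<longleftrightarrow> beh sem W = \<pi>"
  by (simp add: sat_def)

lemma HC_imp_HP_tau: "HC semS semT cmp rel \<Longrightarrow> HP_tau semS semT cmp rel"
  unfolding HC_def HP_tau_def sat_def tauH_def by simp

lemma HP_tau_imp_HC:
  assumes hp: "HP_tau semS semT cmp rel"
  shows "HC semS semT cmp rel"
  unfolding HC_def
proof
  fix W
  have "sat semS W {beh semS W}"
    by (simp add: sat_singleton_iff)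
  with hp have "sat semT (cmp W) (tauH rel {beh semS W})"
    unfolding HP_tau_def by blast
  then show "beh semT (cmp W) = tau rel (beh semS W)"
    by (simp add: tauH_def sat_singleton_iff)
qed

lemma HC_iff_HP_tau: "HC semS semT cmp rel \<longleftrightarrow> HP_tau semS semT cmp rel"
  using HC_imp_HP_tau HP_tau_imp_HC by blast

lemma HC_imp_HP_sigma:
  assumes insertion: "\<And>\<pi>. tau rel (sigma rel \<pi>) = \<pi>"
    and hc: "HC semS semT cmp rel"
  shows "HP_sigma semS semT cmp rel"
  unfolding HP_sigma_def
proof (intro allI impI)
  fix W HT
  assume "sat semS W (sigmaH rel HT)"
  then obtain \<pi> where "\<pi> \<in> HT" and "beh semS W = sigma rel \<pi>"
    by (auto simp: sat_def sigmaH_def)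
  with hc insertion show "sat semT (cmp W) HT"
    by (simp add: HC_def sat_def)
qed

lemma HP_sigma_imp_HC:
  assumes reflection: "\<And>\<pi>. sigma rel (tau rel \<pi>) = \<pi>"
    and hp: "HP_sigma semS semT cmp rel"
  shows "HC semS semT cmp rel"
  unfolding HC_def
proof
  fix W
  have "sat semS W (sigmaH rel {tau rel (beh semS W)})"
    by (simp add: sigmaH_def reflection sat_singleton_iff)
  with hp have "sat semT (cmp W) {tau rel (beh semS W)}"
    unfolding HP_sigma_def by blast
  then show "beh semT (cmp W) = tau rel (beh semS W)"
    by (simp add: sat_singleton_iff)
qed

theorem theoremB3:
  fixes semS :: "'ps \<Rightarrow> 'ts \<Rightarrow> bool" and semT :: "'pt \<Rightarrow> 'tt \<Rightarrow> bool"
    and cmp :: "'ps \<Rightarrow> 'pt" and rel :: "'ts \<Rightarrow> 'tt \<Rightarrow> bool"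
  shows "(HC semS semT cmp rel \<longleftrightarrow> HP_tau semS semT cmp rel)
    \<and> (tau rel \<circ> sigma rel = id \<longrightarrow> HC semS semT cmp rel \<longrightarrow> HP_sigma semS semT cmp rel)
    \<and> (sigma rel \<circ> tau rel = id \<longrightarrow> HP_sigma semS semT cmp rel \<longrightarrow> HC semS semT cmp rel)"
proof (intro conjI impI)
  show "HC semS semT cmp rel \<longleftrightarrow> HP_tau semS semT cmp rel"
    by (rule HC_iff_HP_tau)
next
  assume insertion: "tau rel \<circ> sigma rel = id" and "HC semS semT cmp rel"
  moreover have "\<And>\<pi>. tau rel (sigma rel \<pi>) = \<pi>"
    using insertion by (rule pointfree_idE)
  ultimately show "HP_sigma semS semT cmp rel"
    by (blast intro: HC_imp_HP_sigma)
next
  assume reflection: "sigma rel \<circ> tau rel = id" and "HP_sigma semS semT cmp rel"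
  moreover have "\<And>\<pi>. sigma rel (tau rel \<pi>) = \<pi>"
    using reflection by (rule pointfree_idE)
  ultimately show "HC semS semT cmp rel"
    by (blast intro: HP_sigma_imp_HC)
qed

end
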